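(* Let $r>0$, $\theta\in\mathbb{R}$, $\sigma>0$, and let $Y\sim\mathrm{VG}(r,\theta,\sigma,0)$. Let $\mu_k'=\mathbb{E}[Y^k]$ and $\mu_k=\mathbb{E}[(Y-\mathbb{E}[Y])^k]$ for integers $k\geq 0$ (so $\mu_0'=\mu_0=1$). Then \[\mu_{k+1}'=\theta(2k+r)\mu_k'+\sigma^2k(r+k-1)\mu_{k-1}', \quad k\geq1,\] and \[\mu_{k+1}=2k\theta\mu_k+k\big(\sigma^2(r+k-1)+2\theta^2r\big)\mu_{k-1}+k(k-1)r\theta\sigma^2\mu_{k-2}, \quad k\geq2.\]
   Context: For $r>0$, $\theta\in\mathbb{R}$, $\sigma>0$, $\mu\in\mathbb{R}$, the variance-gamma distribution $\mathrm{VG}(r,\theta,\sigma,\mu)$ is the probability distribution on $\mathbb{R}$ with density \[p(x) = \frac{1}{\sigma\sqrt{\pi}\, \Gamma(r/2)} \mathrm{e}^{\theta (x-\mu)/\sigma^2} \bigg(\frac{|x-\mu|}{2\sqrt{\theta^2 + \sigma^2}}\bigg)^{\frac{r-1}{2}} K_{\frac{r-1}{2}}\bigg(\frac{\sqrt{\theta^2 + \sigma^2}}{\sigma^2} |x-\mu| \bigg),\quad x\in\mathbb{R},\] where $K_\nu(x)=\int_0^\infty \mathrm{e}^{-x\cosh t}\cosh(\nu t)\,\mathrm{d}t$, $x>0$, is the modified Bessel function of the second kind. (All moments of this distribution are finite.) *)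

theory Defs
  imports "HOL-Probability.Probability"
begin

definition besselK :: "real \<Rightarrow> real \<Rightarrow> real" where
  "besselK \<nu> x = (LINT t:{0..}|lborel. exp (- x * cosh t) * cosh (\<nu> * t))"

definition vg_density :: "real \<Rightarrow> real \<Rightarrow> real \<Rightarrow> real \<Rightarrow> real \<Rightarrow> real" where
  "vg_density r \<theta> \<sigma> \<mu> x =
     1 / (\<sigma> * sqrt pi * Gamma (r / 2)) * exp (\<theta> * (x - \<mu>) / \<sigma>\<^sup>2)
     * (\<bar>x - \<mu>\<bar> / (2 * sqrt (\<theta>\<^sup>2 + \<sigma>\<^sup>2))) powr ((r - 1) / 2)
     * besselK ((r - 1) / 2) (sqrt (\<theta>\<^sup>2 + \<sigma>\<^sup>2) / \<sigma>\<^sup>2 * \<bar>x - \<mu>\<bar>)"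

end

theory Submission
  imports Defs "HOL-Real_Asymp.Real_Asymp"
begin

text \<open>
  Let \<open>G\<close> be chi-squared with \<open>r\<close> degrees of freedom and \<open>Z\<close> standard normal, independent.
  Integrating \<open>G\<close> out of the joint density of \<open>(\<theta> G + \<sigma> sqrt G Z, G)\<close> produces the Bessel
  function of order \<open>(r - 1) / 2\<close>, so \<open>Y\<close> has the law of \<open>\<theta> G + \<sigma> sqrt G Z\<close>. Two integrations
  by parts are available for this representation: \<open>E[Z f(Z)] = E[f'(Z)]\<close> conditionally on \<open>G\<close>,
  and \<open>E[(G - r) h(G)] = 2 E[G h'(G)]\<close> conditionally on \<open>Z\<close>. Writing \<open>A j\<close>, \<open>B j\<close>, \<open>S j\<close> for
  the expectations of \<open>(Y - c)^j\<close>, \<open>G (Y - c)^j\<close> and \<open>sqrt G Z (Y - c)^j\<close>, they give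
  \<open>S j = \<sigma> j B (j - 1)\<close> and \<open>B j = r A j + 2 \<theta> j B (j - 1) + \<sigma> j S (j - 1)\<close>, while
  \<open>A (j + 1) = \<theta> B j + \<sigma> S j - c A j\<close> holds trivially. Eliminating \<open>B\<close> and \<open>S\<close> leaves a
  three-term recurrence for the moments of \<open>Y - c\<close>, valid for every \<open>c\<close>; \<open>c = 0\<close> gives the first
  claim (and \<open>E Y = r \<theta>\<close>), \<open>c = r \<theta>\<close> the second.
\<close>

lemma abs_power_le_power:
  fixes u M :: real
  assumes "\<bar>u\<bar> \<le> M" and "1 \<le> M" and "k \<le> j"
  shows "\<bar>u\<bar> ^ k \<le> M ^ j"
  using power_mono[OF assms(1), of k] power_increasing[OF assms(3,2)] by simp

lemma abs_power_and_deriv_le: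
  fixes u v L t :: real
  assumes u: "\<bar>u\<bar> \<le> L * t" and v: "\<bar>v\<bar> \<le> L * t" and L: "1 \<le> L" and t: "1 \<le> t"
  shows "\<bar>u ^ j\<bar> \<le> ((1 + real j) * L ^ (j + 1)) * t ^ (j + 1)"
    and "\<bar>real j * u ^ (j - 1) * v\<bar> \<le> ((1 + real j) * L ^ (j + 1)) * t ^ (j + 1)"
proof -
  have M: "1 \<le> L * t"
    using L t by (simp add: mult_ge1_I)
  have M_pow: "0 \<le> (L * t) ^ (j + 1)"
    using M by (intro zero_le_power) linarith
  have "(L * t) ^ j \<le> 1 * (L * t) ^ (j + 1)"
    using M by (simp add: power_increasing)
  also have "\<dots> \<le> (1 + real j) * (L * t) ^ (j + 1)"
    using M_pow by (rule mult_right_mono[rotated]) simp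
  finally have "(L * t) ^ j \<le> (1 + real j) * (L * t) ^ (j + 1)" .
  then show "\<bar>u ^ j\<bar> \<le> ((1 + real j) * L ^ (j + 1)) * t ^ (j + 1)"
    using abs_power_le_power[OF u M, of j j] by (simp add: power_abs power_mult_distrib mult_ac)
  have "\<bar>real j * u ^ (j - 1) * v\<bar> \<le> real j * (L * t) ^ j * (L * t)"
    unfolding abs_mult power_abs
    using abs_power_le_power[OF u M, of "j - 1" j] v by (intro mult_mono) auto
  also have "\<dots> = real j * (L * t) ^ (j + 1)"
    by (simp add: mult_ac)
  also have "\<dots> \<le> (1 + real j) * (L * t) ^ (j + 1)"
    using M_pow by (rule mult_right_mono[rotated]) simp
  finally show "\<bar>real j * u ^ (j - 1) * v\<bar> \<le> ((1 + real j) * L ^ (j + 1)) * t ^ (j + 1)"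
    by (simp add: power_mult_distrib mult_ac)
qed

lemma exp_neg_le_power_div:
  fixes y :: real
  assumes "0 < y"
  shows "exp (- y) \<le> (real m / y) ^ m"
proof (cases "m = 0")
  case False
  have "(y / real m) ^ m \<le> exp (y / real m) ^ m"
    using assms by (intro power_mono) (auto intro: order.trans[OF _ exp_ge_add_one_self])
  also have "\<dots> = exp y"
    using False by (simp add: exp_of_nat_mult[symmetric])
  finally have "1 \<le> exp y * (real m / y) ^ m"
    using assms False by (simp add: power_divide field_simps)
  then show ?thesis
    by (simp add: exp_minus field_simps)
qed (use assms in simp)

lemma one_plus_power_le:
  fixes g :: real
  assumes "0 \<le> g"
  shows "(1 + g) ^ m \<le> 2 ^ m * (1 + g ^ m)"
proof -
  have "(1 + g) ^ m \<le> (2 * max 1 g) ^ m"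
    using assms by (intro power_mono) auto
  also have "\<dots> = 2 ^ m * max 1 g ^ m"
    by (simp add: power_mult_distrib)
  also have "max 1 g ^ m \<le> 1 + g ^ m"
    using assms by (cases "1 \<le> g") (auto simp: max_def)
  finally show ?thesis
    by simp
qed

lemma sqrt_le_one_plus:
  fixes g :: real
  assumes "0 \<le> g"
  shows "sqrt g \<le> 1 + g"
proof -
  have "sqrt g \<le> sqrt ((1 + g)\<^sup>2)"
    using assms by (intro real_sqrt_le_mono) (simp add: power2_eq_square algebra_simps)
  then show ?thesis
    using assms by simp
qed

lemma abs_sqrt_affine_le:
  fixes \<theta> \<sigma> z c g :: real
  assumes g: "0 < g"
  shows "\<bar>\<theta> * g + \<sigma> * sqrt g * z - c\<bar> \<le> (1 + \<bar>\<theta>\<bar> + \<bar>\<sigma> * z\<bar> + \<bar>c\<bar>) * (1 + g)"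
    and "\<bar>\<theta> * g + \<sigma> * sqrt g * z / 2\<bar> \<le> (1 + \<bar>\<theta>\<bar> + \<bar>\<sigma> * z\<bar> + \<bar>c\<bar>) * (1 + g)"
proof -
  have "\<bar>\<theta>\<bar> * g + \<bar>\<sigma> * z\<bar> * sqrt g + \<bar>c\<bar> * 1
      \<le> \<bar>\<theta>\<bar> * (1 + g) + \<bar>\<sigma> * z\<bar> * (1 + g) + \<bar>c\<bar> * (1 + g)"
    using g sqrt_le_one_plus[of g] by (intro add_mono mult_left_mono) auto
  also have "\<dots> \<le> (1 + \<bar>\<theta>\<bar> + \<bar>\<sigma> * z\<bar> + \<bar>c\<bar>) * (1 + g)"
    using g by (simp add: algebra_simps)
  finally have bound: "\<bar>\<theta>\<bar> * g + \<bar>\<sigma> * z\<bar> * sqrt g + \<bar>c\<bar> \<le> (1 + \<bar>\<theta>\<bar> + \<bar>\<sigma> * z\<bar> + \<bar>c\<bar>) * (1 + g)"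
    by simp
  have "\<bar>\<theta> * g + \<sigma> * sqrt g * z - c\<bar> \<le> \<bar>\<theta>\<bar> * g + \<bar>\<sigma> * z\<bar> * sqrt g + \<bar>c\<bar>"
    "\<bar>\<theta> * g + \<sigma> * sqrt g * z / 2\<bar> \<le> \<bar>\<theta>\<bar> * g + \<bar>\<sigma> * z\<bar> * sqrt g + \<bar>c\<bar>"
    using g by (auto simp: abs_mult
        intro!: abs_triangle_ineq4[THEN order_trans] abs_triangle_ineq[THEN order_trans])
  then show "\<bar>\<theta> * g + \<sigma> * sqrt g * z - c\<bar> \<le> (1 + \<bar>\<theta>\<bar> + \<bar>\<sigma> * z\<bar> + \<bar>c\<bar>) * (1 + g)"
    and "\<bar>\<theta> * g + \<sigma> * sqrt g * z / 2\<bar> \<le> (1 + \<bar>\<theta>\<bar> + \<bar>\<sigma> * z\<bar> + \<bar>c\<bar>) * (1 + g)"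
    using bound by linarith+
qed

lemma borel_measurable_cosh [measurable]: "(cosh :: real \<Rightarrow> real) \<in> borel_measurable borel"
  by (intro borel_measurable_continuous_onI continuous_intros)

lemma (in pair_sigma_finite) integrable_product:
  fixes f g :: "_ \<Rightarrow> real"
  assumes f: "integrable M1 f" and g: "integrable M2 g"
  shows "integrable (M1 \<Otimes>\<^sub>M M2) (\<lambda>\<omega>. f (fst \<omega>) * g (snd \<omega>))"
proof -
  have [measurable]: "f \<in> borel_measurable M1" "g \<in> borel_measurable M2"
    using f g by auto
  have "(\<integral>\<^sup>+\<omega>. ennreal (norm (f (fst \<omega>) * g (snd \<omega>))) \<partial>(M1 \<Otimes>\<^sub>M M2))
      = (\<integral>\<^sup>+x. \<integral>\<^sup>+y. ennreal (norm (f x)) * ennreal (norm (g y)) \<partial>M2 \<partial>M1)"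
    by (subst M2.nn_integral_fst[symmetric]) (auto simp: abs_mult ennreal_mult)
  also have "\<dots> = (\<integral>\<^sup>+x. ennreal (norm (f x)) \<partial>M1) * (\<integral>\<^sup>+y. ennreal (norm (g y)) \<partial>M2)"
    by (simp add: nn_integral_cmult nn_integral_multc)
  also have "\<dots> < \<infinity>"
    using f g unfolding integrable_iff_bounded by (simp add: ennreal_mult_less_top)
  finally show ?thesis
    unfolding integrable_iff_bounded by simp
qed

section \<open>Integrals over the positive half-line\<close>

lemma eventually_in_exp_interval:
  fixes c x :: real
  assumes "0 < c" and "0 < x"
  shows "eventually (\<lambda>n. x \<in> {c * exp (- real n) .. c * exp (real n)}) sequentially"
proof -
  obtain N :: nat where N: "\<bar>ln (x / c)\<bar> \<le> real N"
    using real_arch_simple by blast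
  have "exp (- real n) \<le> exp (ln (x / c)) \<and> exp (ln (x / c)) \<le> exp (real n)" if "N \<le> n" for n
    using N that by auto
  then show ?thesis
    unfolding eventually_sequentially using assms by (auto simp: field_simps)
qed

lemma nn_integral_pos_reals_exp_subst:
  fixes f :: "real \<Rightarrow> real" and c :: real
  assumes "0 < c" and [measurable]: "f \<in> borel_measurable borel" and "\<And>x. 0 \<le> f x"
  shows "(\<integral>\<^sup>+x. ennreal (f x * indicator {0<..} x) \<partial>lborel)
       = (\<integral>\<^sup>+t. ennreal (f (c * exp t) * (c * exp t)) \<partial>lborel)"
proof -
  define F where "F n x = ennreal (f x * indicator {c * exp (- real n) .. c * exp (real n)} x)"
    for n :: nat and x
  define G where "G n t = ennreal (f (c * exp t) * (c * exp t) * indicator {- real n .. real n} t)"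
    for n :: nat and t
  have FG: "integral\<^sup>N lborel (F n) = integral\<^sup>N lborel (G n)" for n
    unfolding F_def G_def
    by (rule nn_integral_substitution[where g = "\<lambda>t. c * exp t" and g' = "\<lambda>t. c * exp t"
          and a = "- real n" and b = "real n", simplified])
       (use assms in \<open>auto intro!: derivative_eq_intros continuous_intros
          simp: less_imp_le set_borel_measurable_def\<close>)
  have incF: "incseq F"
  proof (intro incseq_SucI le_funI)
    fix n x
    have "c * exp (- real (Suc n)) \<le> c * exp (- real n)" "c * exp (real n) \<le> c * exp (real (Suc n))"
      using assms(1) by auto
    then show "F n x \<le> F (Suc n) x"
      unfolding F_def using assms(3)[of x] by (intro ennreal_leI) (auto split: split_indicator)
  qed
  have limF: "(\<lambda>n. F n x) \<longlonglongrightarrow> ennreal (f x * indicator {0<..} x)" for x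
  proof (cases "0 < x")
    case True
    have "eventually (\<lambda>n. F n x = ennreal (f x * indicator {0<..} x)) sequentially"
      using eventually_in_exp_interval[OF assms(1) True] by eventually_elim (use True in \<open>simp add: F_def\<close>)
    then show ?thesis
      by (rule tendsto_eventually)
  next
    case False
    have "F n x = 0" for n
    proof -
      have "0 < c * exp (- real n)"
        using assms(1) by simp
      then show ?thesis
        using False by (simp add: F_def)
    qed
    then show ?thesis
      using False by simp
  qed
  have F_lim: "(\<lambda>n. integral\<^sup>N lborel (F n)) \<longlonglongrightarrow> (\<integral>\<^sup>+x. ennreal (f x * indicator {0<..} x) \<partial>lborel)"
    by (rule nn_integral_LIMSEQ[OF incF _ limF]) (simp add: F_def)
  have incG: "incseq G"
    unfolding incseq_def le_fun_def G_def
    using assms by (auto intro!: ennreal_leI split: split_indicator)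
  have limG: "(\<lambda>n. G n t) \<longlonglongrightarrow> ennreal (f (c * exp t) * (c * exp t))" for t
  proof -
    obtain N :: nat where "\<bar>t\<bar> \<le> real N"
      using real_arch_simple by blast
    then have "eventually (\<lambda>n. G n t = ennreal (f (c * exp t) * (c * exp t))) sequentially"
      unfolding eventually_sequentially G_def by (intro exI[of _ N]) (auto simp: indicator_def)
    then show ?thesis
      by (rule tendsto_eventually)
  qed
  have G_lim: "(\<lambda>n. integral\<^sup>N lborel (G n)) \<longlonglongrightarrow> (\<integral>\<^sup>+t. ennreal (f (c * exp t) * (c * exp t)) \<partial>lborel)"
    by (rule nn_integral_LIMSEQ[OF incG _ limG]) (simp add: G_def)
  show ?thesis
    using F_lim G_lim unfolding FG by (rule LIMSEQ_unique)
qed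

lemma nn_integral_powr_exp_finite:
  fixes s A :: real
  assumes "0 < s" and "0 < A"
  shows "(\<integral>\<^sup>+g. ennreal (g powr (s - 1) * exp (- A * g) * indicator {0<..} g) \<partial>lborel) < \<infinity>"
proof -
  let ?f = "\<lambda>g. ennreal (g powr (s - 1) * exp (- A * g) * indicator {0<..} g)"
  have "(\<integral>\<^sup>+g. ?f g \<partial>lborel) = \<bar>1/A\<bar> * (\<integral>\<^sup>+x. ?f (0 + 1/A * x) \<partial>lborel)"
    using assms by (intro nn_integral_real_affine) auto
  also have "(\<integral>\<^sup>+x. ?f (0 + 1/A * x) \<partial>lborel)
      = (\<integral>\<^sup>+x. ennreal (A powr (1 - s)) * (ennreal (x powr (s - 1) / exp x) * indicator {0..} x) \<partial>lborel)"
  proof (intro nn_integral_cong)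
    fix x :: real
    show "?f (0 + 1/A * x) = ennreal (A powr (1 - s)) * (ennreal (x powr (s - 1) / exp x) * indicator {0..} x)"
    proof (cases "0 < x")
      case True
      have "(x / A) powr (s - 1) = A powr (1 - s) * x powr (s - 1)"
        using True assms by (simp add: powr_divide powr_diff)
      moreover have "- A * (0 + 1 / A * x) = - x"
        using assms by simp
      ultimately have "?f (0 + 1/A * x) = ennreal (A powr (1 - s) * x powr (s - 1) * exp (- x))"
        using True assms by (simp only:) simp
      then show ?thesis
        using True by (simp add: ennreal_mult'[symmetric] exp_minus divide_inverse mult.assoc)
    qed (use assms in \<open>auto simp: indicator_def zero_less_divide_iff\<close>)
  qed
  also have "\<dots> = ennreal (A powr (1 - s)) * (\<integral>\<^sup>+x. ennreal (x powr (s - 1) / exp x) * indicator {0..} x \<partial>lborel)"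
    by (intro nn_integral_cmult) auto
  also have "(\<integral>\<^sup>+x. ennreal (x powr (s - 1) / exp x) * indicator {0..} x \<partial>lborel) = ennreal (Gamma s)"
    by (intro nn_integral_has_integral_lebesgue' Gamma_integral_real assms) auto
  finally show ?thesis
    by (simp add: ennreal_mult_less_top)
qed

lemma nn_integral_powr_exp_inv_finite:
  fixes A B \<nu> :: real
  assumes A: "0 < A" and B: "0 < B"
  shows "(\<integral>\<^sup>+g. ennreal (g powr (\<nu> - 1) * exp (- A * g - B / g) * indicator {0<..} g) \<partial>lborel) < \<infinity>"
proof -
  obtain m :: nat where m: "- \<nu> < real m"
    using reals_Archimedean2 by blast
  have "g powr (\<nu> - 1) * exp (- A * g - B / g) \<le> (real m / B) ^ m * (g powr ((\<nu> + real m) - 1) * exp (- A * g))"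
    if g: "0 < g" for g
  proof -
    have "exp (- (B / g)) \<le> (real m / (B / g)) ^ m"
      using g B by (intro exp_neg_le_power_div) simp
    also have "\<dots> = (real m / B) ^ m * g ^ m"
      using g B by (simp add: power_divide field_simps)
    finally have "g powr (\<nu> - 1) * exp (- A * g) * exp (- (B / g))
        \<le> g powr (\<nu> - 1) * exp (- A * g) * ((real m / B) ^ m * g ^ m)"
      by (intro mult_left_mono) auto
    moreover have "g powr ((\<nu> + real m) - 1) = g powr (\<nu> - 1) * g ^ m"
      using g by (simp add: powr_add[symmetric] powr_realpow[symmetric] algebra_simps)
    ultimately show ?thesis
      by (simp add: exp_diff exp_minus field_simps)
  qed
  then have "(\<integral>\<^sup>+g. ennreal (g powr (\<nu> - 1) * exp (- A * g - B / g) * indicator {0<..} g) \<partial>lborel)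
     \<le> (\<integral>\<^sup>+g. ennreal ((real m / B) ^ m)
          * ennreal (g powr ((\<nu> + real m) - 1) * exp (- A * g) * indicator {0<..} g) \<partial>lborel)"
    using B by (intro nn_integral_mono)
      (auto simp: ennreal_mult'[symmetric] intro!: ennreal_leI split: split_indicator)
  also have "\<dots> = ennreal ((real m / B) ^ m)
      * (\<integral>\<^sup>+g. ennreal (g powr ((\<nu> + real m) - 1) * exp (- A * g) * indicator {0<..} g) \<partial>lborel)"
    by (intro nn_integral_cmult) auto
  also have "\<dots> < \<infinity>"
    using nn_integral_powr_exp_finite[of "\<nu> + real m" A] m A by (simp add: ennreal_mult_less_top)
  finally show ?thesis .
qed

lemma nn_integral_exp_mult_exp_cosh:
  fixes \<nu> z :: real
  shows "(\<integral>\<^sup>+t. ennreal (exp (\<nu> * t) * exp (- z * cosh t)) \<partial>lborel)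
       = 2 * (\<integral>\<^sup>+t. ennreal (indicator {0..} t * (exp (- z * cosh t) * cosh (\<nu> * t))) \<partial>lborel)"
proof -
  define h where "h t = exp (\<nu> * t) * exp (- z * cosh t)" for t
  have h_halves: "(\<integral>\<^sup>+t. ennreal (h t) \<partial>lborel)
      = (\<integral>\<^sup>+t. ennreal (h t * indicator {0..} t) \<partial>lborel) + (\<integral>\<^sup>+t. ennreal (h (- t) * indicator {0..} t) \<partial>lborel)"
  proof -
    have "(\<integral>\<^sup>+t. ennreal (h t) \<partial>lborel)
        = (\<integral>\<^sup>+t. ennreal (h t * indicator {0..} t) \<partial>lborel) + (\<integral>\<^sup>+t. ennreal (h t * indicator {..<0} t) \<partial>lborel)"
      by (subst nn_integral_add[symmetric])
         (auto simp: h_def intro!: nn_integral_cong split: split_indicator)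
    also have "(\<integral>\<^sup>+t. ennreal (h t * indicator {..<0} t) \<partial>lborel)
        = (\<integral>\<^sup>+t. ennreal (h (0 + -1 * t) * indicator {..<0} (0 + -1 * t)) \<partial>lborel)"
      using nn_integral_real_affine[of "\<lambda>t. ennreal (h t * indicator {..<0} t)" "-1" 0]
      unfolding h_def by simp
    also have "\<dots> = (\<integral>\<^sup>+t. ennreal (h (- t) * indicator {0..} t) \<partial>lborel)"
      by (auto intro!: nn_integral_cong_AE simp: indicator_def
          intro: AE_mp[OF AE_lborel_singleton[of 0]])
    finally show ?thesis .
  qed
  have h_even: "ennreal (h t * indicator {0..} t) + ennreal (h (- t) * indicator {0..} t)
      = 2 * ennreal (indicator {0..} t * (exp (- z * cosh t) * cosh (\<nu> * t)))" for t
  proof -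
    have "h t + h (- t) = 2 * (exp (- z * cosh t) * cosh (\<nu> * t))"
      unfolding h_def cosh_field_def by (simp add: field_simps)
    then have eq: "h t * indicator {0..} t + h (- t) * indicator {0..} t
        = 2 * (indicator {0..} t * (exp (- z * cosh t) * cosh (\<nu> * t)))"
      by (auto split: split_indicator)
    have "0 \<le> h t * indicator {0..} t" "0 \<le> h (- t) * indicator {0..} t"
      "0 \<le> indicator {0..} t * (exp (- z * cosh t) * cosh (\<nu> * t))"
      by (simp_all add: h_def)
    then show ?thesis
      by (simp only: ennreal_plus[symmetric] eq ennreal_mult'' ennreal_numeral)
  qed
  have "(\<integral>\<^sup>+t. ennreal (h t) \<partial>lborel)
      = (\<integral>\<^sup>+t. ennreal (h t * indicator {0..} t) + ennreal (h (- t) * indicator {0..} t) \<partial>lborel)"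
    unfolding h_halves by (rule nn_integral_add[symmetric]) (simp_all add: h_def)
  also have "\<dots> = 2 * (\<integral>\<^sup>+t. ennreal (indicator {0..} t * (exp (- z * cosh t) * cosh (\<nu> * t))) \<partial>lborel)"
    unfolding h_even by (rule nn_integral_cmult) simp
  finally show ?thesis
    unfolding h_def .
qed

text \<open>The substitution \<open>g = sqrt (B / A) * exp t\<close> turns \<open>A * g + B / g\<close> into \<open>2 * sqrt (A * B) * cosh t\<close>.\<close>

lemma nn_integral_powr_exp_inv_eq_besselK:
  fixes A B \<nu> :: real
  assumes A: "0 < A" and B: "0 < B"
  shows "(\<integral>\<^sup>+g. ennreal (g powr (\<nu> - 1) * exp (- A * g - B / g) * indicator {0<..} g) \<partial>lborel)
       = ennreal (2 * (B / A) powr (\<nu> / 2) * besselK \<nu> (2 * sqrt (A * B)))"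
proof -
  define c where "c = sqrt (B / A)"
  define z where "z = 2 * sqrt (A * B)"
  define h where "h t = exp (\<nu> * t) * exp (- z * cosh t)" for t
  define I where "I = (\<integral>\<^sup>+t. ennreal (indicator {0..} t * (exp (- z * cosh t) * cosh (\<nu> * t))) \<partial>lborel)"
  have c: "0 < c"
    using A B by (simp add: c_def)
  have Ac: "A * c = sqrt (A * B)" and Bc: "B / c = sqrt (A * B)"
    using A B by (simp_all add: c_def real_sqrt_divide real_sqrt_mult field_simps)
  let ?f = "\<lambda>g. g powr (\<nu> - 1) * exp (- A * g - B / g)"
  have f_subst: "?f (c * exp t) * (c * exp t) = c powr \<nu> * h t" for t
  proof -
    have "(c * exp t) powr (\<nu> - 1) * (c * exp t) = c powr \<nu> * exp (\<nu> * t)"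
      using c by (simp add: powr_diff powr_mult exp_powr_real mult.commute)
    moreover have "- A * (c * exp t) - B / (c * exp t) = - z * cosh t"
      unfolding z_def cosh_field_def Ac[symmetric]
      using c Bc A B by (simp add: exp_minus field_simps c_def)
    ultimately show ?thesis
      unfolding h_def by (metis (no_types, lifting) mult.assoc mult.commute)
  qed
  have "(\<integral>\<^sup>+g. ennreal (?f g * indicator {0<..} g) \<partial>lborel)
      = (\<integral>\<^sup>+t. ennreal (?f (c * exp t) * (c * exp t)) \<partial>lborel)"
    by (rule nn_integral_pos_reals_exp_subst[OF c]) auto
  also have "\<dots> = (\<integral>\<^sup>+t. ennreal (c powr \<nu>) * ennreal (h t) \<partial>lborel)"
    unfolding f_subst by (intro nn_integral_cong) (simp add: h_def ennreal_mult)
  also have "\<dots> = ennreal (c powr \<nu>) * (\<integral>\<^sup>+t. ennreal (h t) \<partial>lborel)"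
    by (rule nn_integral_cmult) (simp add: h_def)
  also have "(\<integral>\<^sup>+t. ennreal (h t) \<partial>lborel) = 2 * I"
    unfolding h_def I_def by (rule nn_integral_exp_mult_exp_cosh)
  finally have LHS: "(\<integral>\<^sup>+g. ennreal (?f g * indicator {0<..} g) \<partial>lborel) = ennreal (c powr \<nu>) * (2 * I)" .
  then have "I < \<infinity>"
    using nn_integral_powr_exp_inv_finite[OF A B, of \<nu>] c
    by (auto simp: ennreal_mult_less_top ennreal_mult_eq_top_iff)
  moreover have "besselK \<nu> z = enn2real I"
    unfolding besselK_def set_lebesgue_integral_def I_def
    by (subst integral_eq_nn_integral) (auto intro!: mult_nonneg_nonneg)
  moreover have "c powr \<nu> = (B / A) powr (\<nu> / 2)"
    using A B by (simp add: c_def powr_half_sqrt[symmetric] powr_powr)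
  ultimately show ?thesis
    using LHS c unfolding z_def[symmetric]
    by (simp add: ennreal_mult'' ennreal_enn2real_if mult_ac)
qed

section \<open>Stein identities for the normal and chi-squared laws\<close>

definition chisq_kernel :: "real \<Rightarrow> real \<Rightarrow> real" where
  "chisq_kernel r g = (if 0 < g then g powr (r / 2 - 1) * exp (- g / 2) else 0)"

lemma chisq_kernel_nonneg: "0 \<le> chisq_kernel r g"
  by (simp add: chisq_kernel_def)

lemma borel_measurable_chisq_kernel [measurable]: "chisq_kernel r \<in> borel_measurable borel"
  unfolding chisq_kernel_def[abs_def] by measurable

lemma integrable_chisq_kernel:
  assumes "0 < r"
  shows "integrable lborel (chisq_kernel r)"
proof (rule integrableI_nonneg)
  have "(\<integral>\<^sup>+g. ennreal (chisq_kernel r g) \<partial>lborel)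
      = (\<integral>\<^sup>+g. ennreal (g powr (r / 2 - 1) * exp (- (1 / 2) * g) * indicator {0<..} g) \<partial>lborel)"
    by (intro nn_integral_cong) (auto simp: chisq_kernel_def)
  also have "\<dots> < \<infinity>"
    using nn_integral_powr_exp_finite[of "r / 2" "1 / 2"] assms by simp
  finally show "(\<integral>\<^sup>+g. ennreal (chisq_kernel r g) \<partial>lborel) < \<infinity>" .
qed (simp_all add: chisq_kernel_nonneg)

lemma integrable_chisq_kernel_power:
  assumes "0 < r"
  shows "integrable lborel (\<lambda>g. chisq_kernel r g * (1 + g) ^ m)"
proof (rule Bochner_Integration.integrable_bound)
  show "integrable lborel (\<lambda>g. 2 ^ m * (chisq_kernel r g + chisq_kernel (r + 2 * real m) g))"
    using assms by (intro integrable_mult_right Bochner_Integration.integrable_add integrable_chisq_kernel) auto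
  have "chisq_kernel r g * (1 + g) ^ m \<le> 2 ^ m * (chisq_kernel r g + chisq_kernel (r + 2 * real m) g)"
    if "0 < g" for g
  proof -
    have "g powr ((r + 2 * real m) / 2 - 1) = g powr ((r / 2 - 1) + real m)"
      by (simp add: field_simps)
    also have "\<dots> = g powr (r / 2 - 1) * g ^ m"
      using that by (simp add: powr_add powr_realpow)
    finally have "g powr ((r + 2 * real m) / 2 - 1) = g powr (r / 2 - 1) * g ^ m" .
    then have "chisq_kernel (r + 2 * real m) g = chisq_kernel r g * g ^ m"
      using that by (simp add: chisq_kernel_def)
    moreover have "chisq_kernel r g * (1 + g) ^ m \<le> chisq_kernel r g * (2 ^ m * (1 + g ^ m))"
      using that by (intro mult_left_mono one_plus_power_le chisq_kernel_nonneg) auto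
    ultimately show ?thesis
      by (simp add: algebra_simps)
  qed
  then show "AE g in lborel. norm (chisq_kernel r g * (1 + g) ^ m)
      \<le> norm (2 ^ m * (chisq_kernel r g + chisq_kernel (r + 2 * real m) g))"
    using chisq_kernel_nonneg
    by (intro AE_I2) (auto simp: chisq_kernel_def abs_mult)
qed simp

lemma integrable_gauss_power: "integrable lborel (\<lambda>z::real. exp (- z\<^sup>2 / 2) * (1 + \<bar>z\<bar>) ^ m)"
proof (rule Bochner_Integration.integrable_bound)
  show "integrable lborel (\<lambda>z. 2 ^ m * sqrt (2 * pi)
      * (std_normal_density z * \<bar>z\<bar> ^ 0 + std_normal_density z * \<bar>z\<bar> ^ m))"
    by (intro integrable_mult_right Bochner_Integration.integrable_add integrable_std_normal_moment_abs)
  have "exp (- z\<^sup>2 / 2) * (1 + \<bar>z\<bar>) ^ m \<le> exp (- z\<^sup>2 / 2) * (2 ^ m * (1 + \<bar>z\<bar> ^ m))" for z :: real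
    by (intro mult_left_mono one_plus_power_le) auto
  moreover have "sqrt (2 * pi) * (std_normal_density z * \<bar>z\<bar> ^ 0 + std_normal_density z * \<bar>z\<bar> ^ m)
      = exp (- z\<^sup>2 / 2) * (1 + \<bar>z\<bar> ^ m)" for z :: real
    by (simp add: std_normal_density_def field_simps)
  ultimately show "AE z in lborel. norm (exp (- z\<^sup>2 / 2) * (1 + \<bar>z\<bar>) ^ m)
      \<le> norm (2 ^ m * sqrt (2 * pi) * (std_normal_density z * \<bar>z\<bar> ^ 0 + std_normal_density z * \<bar>z\<bar> ^ m))"
    by (intro AE_I2) (simp add: mult_ac)
qed simp

lemma integrable_gauss_bounded:
  fixes f :: "real \<Rightarrow> real"
  assumes [measurable]: "f \<in> borel_measurable borel" and bound: "\<And>z. \<bar>f z\<bar> \<le> K * (1 + \<bar>z\<bar>) ^ m"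
  shows "integrable lborel (\<lambda>z. exp (- z\<^sup>2 / 2) * f z)"
proof (rule Bochner_Integration.integrable_bound)
  show "integrable lborel (\<lambda>z. K * (exp (- z\<^sup>2 / 2) * (1 + \<bar>z\<bar>) ^ m))"
    by (intro integrable_mult_right integrable_gauss_power)
  have K: "0 \<le> K"
    using order_trans[OF abs_ge_zero bound[of 0]] by simp
  have "exp (- z\<^sup>2 / 2) * \<bar>f z\<bar> \<le> exp (- z\<^sup>2 / 2) * (K * (1 + \<bar>z\<bar>) ^ m)" for z
    by (intro mult_left_mono bound) simp
  then show "AE z in lborel. norm (exp (- z\<^sup>2 / 2) * f z) \<le> norm (K * (exp (- z\<^sup>2 / 2) * (1 + \<bar>z\<bar>) ^ m))"
    using K by (intro AE_I2) (simp add: abs_mult mult_ac)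
qed simp

lemma integrable_chisq_kernel_bounded:
  fixes f :: "real \<Rightarrow> real"
  assumes r: "0 < r" and [measurable]: "f \<in> borel_measurable borel"
    and bound: "\<And>g. 0 < g \<Longrightarrow> \<bar>f g\<bar> \<le> K * (1 + g) ^ m"
  shows "integrable lborel (\<lambda>g. chisq_kernel r g * f g)"
proof (rule Bochner_Integration.integrable_bound)
  show "integrable lborel (\<lambda>g. K * (chisq_kernel r g * (1 + g) ^ m))"
    by (intro integrable_mult_right integrable_chisq_kernel_power r)
  have "0 * (1 + 1) ^ m \<le> K * (1 + 1 :: real) ^ m"
    using order_trans[OF abs_ge_zero bound[of 1]] by simp
  then have K: "0 \<le> K"
    by (rule mult_right_le_imp_le) simp
  have "norm (chisq_kernel r g * f g) \<le> norm (K * (chisq_kernel r g * (1 + g) ^ m))" for g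
  proof (cases "0 < g")
    case True
    then have "chisq_kernel r g * \<bar>f g\<bar> \<le> chisq_kernel r g * (K * (1 + g) ^ m)"
      by (intro mult_left_mono bound chisq_kernel_nonneg)
    then show ?thesis
      using True K chisq_kernel_nonneg[of r g] by (simp add: abs_mult mult_ac)
  qed (simp add: chisq_kernel_def)
  then show "AE g in lborel. norm (chisq_kernel r g * f g) \<le> norm (K * (chisq_kernel r g * (1 + g) ^ m))"
    by (intro AE_I2)
qed simp

lemma tendsto_zero_gauss_bounded:
  fixes F :: "real \<Rightarrow> real"
  assumes bound: "\<And>z. \<bar>F z\<bar> \<le> K * ((1 + \<bar>z\<bar>) ^ m * exp (- z\<^sup>2 / 2))"
  shows "(F \<longlongrightarrow> 0) at_top" and "(F \<longlongrightarrow> 0) at_bot"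
proof -
  have "eventually (\<lambda>z. norm (F z) \<le> K * ((1 + z) ^ m * exp (- z\<^sup>2 / 2))) at_top"
    using eventually_ge_at_top[of 0]
  proof eventually_elim
    case (elim z)
    then show ?case
      using bound[of z] by simp
  qed
  moreover have "((\<lambda>z::real. (1 + z) ^ m * exp (- z\<^sup>2 / 2)) \<longlongrightarrow> 0) at_top"
    by real_asymp
  ultimately show "(F \<longlongrightarrow> 0) at_top"
    by (rule Lim_null_comparison[OF _ tendsto_mult_right_zero])
  have "eventually (\<lambda>z. norm (F z) \<le> K * ((1 - z) ^ m * exp (- z\<^sup>2 / 2))) at_bot"
    using eventually_le_at_bot[of 0]
  proof eventually_elim
    case (elim z)
    then show ?case
      using bound[of z] by simp
  qed
  moreover have "((\<lambda>z::real. (1 - z) ^ m * exp (- z\<^sup>2 / 2)) \<longlongrightarrow> 0) at_bot"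
    by real_asymp
  ultimately show "(F \<longlongrightarrow> 0) at_bot"
    by (rule Lim_null_comparison[OF _ tendsto_mult_right_zero])
qed

lemma tendsto_zero_chisq_bounded:
  fixes F :: "real \<Rightarrow> real"
  assumes r: "0 < r" and bound: "\<And>g. 0 < g \<Longrightarrow> \<bar>F g\<bar> \<le> K * (g powr (r / 2) * exp (- g / 2) * (1 + g) ^ m)"
  shows "(F \<longlongrightarrow> 0) (at_right 0)" and "(F \<longlongrightarrow> 0) at_top"
proof -
  have "eventually (\<lambda>g. norm (F g) \<le> K * (g powr (r / 2) * exp (- g / 2) * (1 + g) ^ m)) (at_right 0)"
    using bound by (auto simp: eventually_at_right_less eventually_at_filter)
  moreover have "((\<lambda>g::real. g powr (r / 2) * exp (- g / 2) * (1 + g) ^ m) \<longlongrightarrow> 0) (at_right 0)"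
    using r by real_asymp
  ultimately show "(F \<longlongrightarrow> 0) (at_right 0)"
    by (rule Lim_null_comparison[OF _ tendsto_mult_right_zero])
  have "eventually (\<lambda>g. norm (F g) \<le> K * (g powr (r / 2) * exp (- g / 2) * (1 + g) ^ m)) at_top"
    using eventually_gt_at_top[of 0] by eventually_elim (use bound in simp)
  moreover have "((\<lambda>g::real. g powr (r / 2) * exp (- g / 2) * (1 + g) ^ m) \<longlongrightarrow> 0) at_top"
    by real_asymp
  ultimately show "(F \<longlongrightarrow> 0) at_top"
    by (rule Lim_null_comparison[OF _ tendsto_mult_right_zero])
qed

lemma gauss_stein_identity:
  fixes h h' :: "real \<Rightarrow> real"
  assumes deriv: "\<And>z. (h has_real_derivative h' z) (at z)"
    and cont: "continuous_on UNIV h'"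
    and bound: "\<And>z. \<bar>h z\<bar> \<le> K * (1 + \<bar>z\<bar>) ^ m" "\<And>z. \<bar>h' z\<bar> \<le> K * (1 + \<bar>z\<bar>) ^ m"
  shows "(\<integral>z. exp (- z\<^sup>2 / 2) * (z * h z - h' z) \<partial>lborel) = 0"
proof -
  define F where "F z = - exp (- z\<^sup>2 / 2) * h z" for z
  have K: "0 \<le> K"
    using order_trans[OF abs_ge_zero bound(1)[of 0]] by simp
  have h_cont: "isCont h z" and h'_cont: "isCont h' z" for z
    using deriv cont by (auto intro: DERIV_isCont simp: continuous_on_eq_continuous_at)
  then have [measurable]: "h \<in> borel_measurable borel" "h' \<in> borel_measurable borel"
    by (auto intro!: borel_measurable_continuous_onI continuous_at_imp_continuous_on)
  have "((\<lambda>z. exp (- z\<^sup>2 / 2)) has_real_derivative - z * exp (- z\<^sup>2 / 2)) (at z)" for z :: real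
    by (auto intro!: derivative_eq_intros simp: power2_eq_square)
  then have F_deriv: "(F has_vector_derivative exp (- z\<^sup>2 / 2) * (z * h z - h' z)) (at z)" for z
    unfolding has_real_derivative_iff_has_vector_derivative[symmetric] F_def
    by (auto intro!: derivative_eq_intros deriv simp: algebra_simps)
  have "\<bar>z * h z - h' z\<bar> \<le> 2 * K * (1 + \<bar>z\<bar>) ^ (m + 1)" for z
  proof -
    have "\<bar>z * h z - h' z\<bar> \<le> \<bar>z\<bar> * \<bar>h z\<bar> + \<bar>h' z\<bar>"
      by (simp add: abs_mult abs_triangle_ineq4[THEN order_trans])
    also have "\<dots> \<le> (1 + \<bar>z\<bar>) * (K * (1 + \<bar>z\<bar>) ^ m) + 1 * (K * (1 + \<bar>z\<bar>) ^ m)"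
      using bound[of z] by (intro add_mono mult_mono) auto
    also have "\<dots> \<le> 2 * K * (1 + \<bar>z\<bar>) ^ (m + 1)"
      using K by (simp add: algebra_simps mult_left_mono)
    finally show ?thesis .
  qed
  then have "integrable lborel (\<lambda>z. exp (- z\<^sup>2 / 2) * (z * h z - h' z))"
    by (intro integrable_gauss_bounded[where K = "2 * K" and m = "m + 1"]) auto
  moreover have "\<bar>F z\<bar> \<le> K * ((1 + \<bar>z\<bar>) ^ m * exp (- z\<^sup>2 / 2))" for z
    using mult_right_mono[OF bound(1)[of z], of "exp (- z\<^sup>2 / 2)"] by (simp add: F_def abs_mult mult_ac)
  note F_lim = tendsto_zero_gauss_bounded[OF this]
  moreover have "isCont (\<lambda>z. exp (- z\<^sup>2 / 2) * (z * h z - h' z)) z" for z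
    using h_cont h'_cont by (intro continuous_intros) auto
  ultimately have "(LBINT z=-\<infinity>..\<infinity>. exp (- z\<^sup>2 / 2) * (z * h z - h' z)) = 0 - 0"
    using F_deriv by (intro interval_integral_FTC_integrable[where F = F])
      (auto simp: ereal_tendsto_simps set_integrable_def)
  then show ?thesis
    by (simp add: interval_lebesgue_integral_def set_lebesgue_integral_def)
qed

lemma chisq_boundary_term_deriv:
  fixes h :: "real \<Rightarrow> real"
  assumes g: "0 < g" and deriv: "(h has_real_derivative D) (at g)"
  shows "((\<lambda>x. - 2 * (x powr (r / 2) * exp (- x / 2) * h x)) has_real_derivative
      chisq_kernel r g * ((g - r) * h g - 2 * g * D)) (at g)"
proof -
  have "((\<lambda>x. exp (- x / 2)) has_real_derivative - exp (- g / 2) / 2) (at g)"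
    by (auto intro!: derivative_eq_intros)
  from DERIV_cmult[OF DERIV_mult[OF DERIV_mult[OF has_real_derivative_powr[OF g, of "r / 2"] this] deriv], of "- 2"]
  have "((\<lambda>x. - 2 * (x powr (r / 2) * exp (- x / 2) * h x)) has_real_derivative
      - 2 * ((r / 2 * g powr (r / 2 - 1) * exp (- g / 2) + - exp (- g / 2) / 2 * g powr (r / 2)) * h g
        + D * (g powr (r / 2) * exp (- g / 2)))) (at g)"
    by simp
  moreover have "g powr (r / 2) = g powr (r / 2 - 1) * g"
    using g by (simp add: powr_diff)
  ultimately show ?thesis
    using g unfolding chisq_kernel_def by (simp add: algebra_simps)
qed

lemma chisq_stein_identity:
  fixes h h' :: "real \<Rightarrow> real"
  assumes r: "0 < r"
    and deriv: "\<And>g. 0 < g \<Longrightarrow> (h has_real_derivative h' g) (at g)"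
    and cont: "continuous_on {0<..} h'"
    and [measurable]: "h \<in> borel_measurable borel" "h' \<in> borel_measurable borel"
    and bound: "\<And>g. 0 < g \<Longrightarrow> \<bar>h g\<bar> \<le> K * (1 + g) ^ m" "\<And>g. 0 < g \<Longrightarrow> \<bar>g * h' g\<bar> \<le> K * (1 + g) ^ m"
  shows "(\<integral>g. chisq_kernel r g * ((g - r) * h g - 2 * g * h' g) \<partial>lborel) = 0"
proof -
  define f where "f g = chisq_kernel r g * ((g - r) * h g - 2 * g * h' g)" for g
  define F where "F g = - 2 * (g powr (r / 2) * exp (- g / 2) * h g)" for g
  have "0 * (1 + 1) ^ m \<le> K * (1 + 1 :: real) ^ m"
    using order_trans[OF abs_ge_zero bound(1)[of 1]] by simp
  then have K: "0 \<le> K"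
    by (rule mult_right_le_imp_le) simp
  have F_deriv: "(F has_real_derivative f g) (at g)" if "0 < g" for g
    unfolding F_def f_def by (rule chisq_boundary_term_deriv[OF that deriv[OF that]])
  have f_cont: "isCont f x" if x: "0 < x" for x
  proof -
    have "eventually (\<lambda>g. g \<in> {0<..}) (nhds x)"
      using x by (intro eventually_nhds_in_open) auto
    then have ev: "eventually (\<lambda>g. g powr (r / 2 - 1) * exp (- g / 2) * ((g - r) * h g - 2 * g * h' g) = f g) (nhds x)"
      by eventually_elim (simp add: f_def chisq_kernel_def)
    have "isCont (\<lambda>g. g powr (r / 2 - 1) * exp (- g / 2) * ((g - r) * h g - 2 * g * h' g)) x"
      using x DERIV_isCont[OF deriv[OF x]] cont
      by (intro continuous_intros) (auto simp: continuous_on_eq_continuous_at)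
    then show ?thesis
      using isCont_cong[OF ev] by simp
  qed
  have "\<bar>(g - r) * h g - 2 * g * h' g\<bar> \<le> (3 + r) * K * (1 + g) ^ (m + 1)" if g: "0 < g" for g
  proof -
    have "\<bar>g - r\<bar> \<le> (1 + r) * (1 + g)"
      using g r mult_nonneg_nonneg[of r g] by (auto simp: algebra_simps abs_if)
    then have "\<bar>(g - r) * h g - 2 * g * h' g\<bar> \<le> ((1 + r) * (1 + g)) * (K * (1 + g) ^ m) + 2 * (K * (1 + g) ^ m)"
      using g r bound[OF g]
      by (auto simp: abs_mult intro!: abs_triangle_ineq4[THEN order_trans] add_mono mult_mono)
    also have "\<dots> \<le> (3 + r) * K * (1 + g) ^ (m + 1)"
      using g r K by (simp add: algebra_simps)
    finally show ?thesis .
  qed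
  then have f_integrable: "integrable lborel f"
    unfolding f_def by (intro integrable_chisq_kernel_bounded[OF r, where K = "(3 + r) * K" and m = "m + 1"]) auto
  have "\<bar>F g\<bar> \<le> 2 * K * (g powr (r / 2) * exp (- g / 2) * (1 + g) ^ m)" if "0 < g" for g
    using mult_left_mono[OF bound(1)[OF that], of "2 * (g powr (r / 2) * exp (- g / 2))"]
    by (simp add: F_def abs_mult mult_ac)
  note F_lim = tendsto_zero_chisq_bounded[OF r this]
  have "set_integrable lborel (einterval 0 \<infinity>) f"
    unfolding set_integrable_def by (rule integrable_mult_indicator) (use f_integrable in auto)
  then have "(LBINT g=0..\<infinity>. f g) = 0 - 0"
    using F_deriv f_cont F_lim
    by (intro interval_integral_FTC_integrable[where F = F])
       (auto simp: ereal_tendsto_simps has_real_derivative_iff_has_vector_derivative[symmetric] zero_ereal_def)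
  moreover have "(LBINT g=0..\<infinity>. f g) = (\<integral>g. f g \<partial>lborel)"
    unfolding zero_ereal_def interval_integral_to_infinity_eq set_lebesgue_integral_def
    by (intro Bochner_Integration.integral_cong) (auto simp: f_def chisq_kernel_def indicator_def)
  ultimately show ?thesis
    by (simp add: f_def)
qed

lemma gauss_stein_linear_power:
  fixes \<alpha> \<gamma> :: real
  shows "(\<integral>z. exp (- z\<^sup>2 / 2) * (z * (\<alpha> + \<gamma> * z) ^ j - real j * (\<alpha> + \<gamma> * z) ^ (j - 1) * \<gamma>) \<partial>lborel) = 0"
proof (rule gauss_stein_identity)
  define L where "L = 1 + \<bar>\<alpha>\<bar> + \<bar>\<gamma>\<bar>"
  fix z :: real
  show "((\<lambda>z. (\<alpha> + \<gamma> * z) ^ j) has_real_derivative real j * (\<alpha> + \<gamma> * z) ^ (j - 1) * \<gamma>) (at z)"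
    by (auto intro!: derivative_eq_intros)
  have "\<bar>\<alpha> + \<gamma> * z\<bar> \<le> L * (1 + \<bar>z\<bar>)" "\<bar>\<gamma>\<bar> \<le> L * (1 + \<bar>z\<bar>)"
    unfolding L_def by (auto simp: abs_mult algebra_simps abs_triangle_ineq[THEN order_trans] mult_left_mono)
  from abs_power_and_deriv_le[OF this _ _, of j]
  show "\<bar>(\<alpha> + \<gamma> * z) ^ j\<bar> \<le> ((1 + real j) * L ^ (j + 1)) * (1 + \<bar>z\<bar>) ^ (j + 1)"
    and "\<bar>real j * (\<alpha> + \<gamma> * z) ^ (j - 1) * \<gamma>\<bar> \<le> ((1 + real j) * L ^ (j + 1)) * (1 + \<bar>z\<bar>) ^ (j + 1)"
    by (simp_all add: L_def)
qed (intro continuous_intros)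

lemma chisq_stein_mixture_power:
  fixes \<theta> \<sigma> c z :: real
  assumes r: "0 < r"
  shows "(\<integral>g. chisq_kernel r g * ((g - r) * (\<theta> * g + \<sigma> * sqrt g * z - c) ^ j
       - real j * (\<theta> * g + \<sigma> * sqrt g * z - c) ^ (j - 1) * (2 * \<theta> * g + \<sigma> * sqrt g * z)) \<partial>lborel) = 0"
proof -
  define H where "H g = \<theta> * g + \<sigma> * sqrt g * z - c" for g
  define h' where "h' g = real j * H g ^ (j - 1) * (\<theta> + \<sigma> * z * (inverse (sqrt g) / 2))" for g
  define L where "L = 1 + \<bar>\<theta>\<bar> + \<bar>\<sigma> * z\<bar> + \<bar>c\<bar>"
  have gh': "g * h' g = real j * H g ^ (j - 1) * (\<theta> * g + \<sigma> * sqrt g * z / 2)"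
    and gh'2: "2 * g * h' g = real j * H g ^ (j - 1) * (2 * \<theta> * g + \<sigma> * sqrt g * z)" if "0 < g" for g
  proof -
    have "g * inverse (sqrt g) = sqrt g"
      using that by (simp add: divide_inverse[symmetric] real_div_sqrt)
    then show "g * h' g = real j * H g ^ (j - 1) * (\<theta> * g + \<sigma> * sqrt g * z / 2)"
      unfolding h'_def by (simp add: algebra_simps)
    then show "2 * g * h' g = real j * H g ^ (j - 1) * (2 * \<theta> * g + \<sigma> * sqrt g * z)"
      by (simp add: algebra_simps)
  qed
  have "(\<integral>g. chisq_kernel r g * ((g - r) * H g ^ j - real j * H g ^ (j - 1) * (2 * \<theta> * g + \<sigma> * sqrt g * z)) \<partial>lborel)
      = (\<integral>g. chisq_kernel r g * ((g - r) * H g ^ j - 2 * g * h' g) \<partial>lborel)"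
    by (rule Bochner_Integration.integral_cong) (auto simp: gh'2 chisq_kernel_def)
  also have "\<dots> = 0"
  proof (rule chisq_stein_identity[OF r])
    fix g :: real
    assume g: "0 < g"
    show "((\<lambda>g. H g ^ j) has_real_derivative h' g) (at g)"
      unfolding H_def h'_def using g by (auto intro!: derivative_eq_intros simp: algebra_simps)
    have "\<bar>H g\<bar> \<le> L * (1 + g)" "\<bar>\<theta> * g + \<sigma> * sqrt g * z / 2\<bar> \<le> L * (1 + g)"
      unfolding H_def L_def using abs_sqrt_affine_le[OF g] by auto
    from abs_power_and_deriv_le[OF this _ _, of j]
    show "\<bar>H g ^ j\<bar> \<le> ((1 + real j) * L ^ (j + 1)) * (1 + g) ^ (j + 1)"
      and "\<bar>g * h' g\<bar> \<le> ((1 + real j) * L ^ (j + 1)) * (1 + g) ^ (j + 1)"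
      using g gh'[OF g] by (simp_all add: L_def)
  next
    show "continuous_on {0<..} h'"
      unfolding h'_def H_def by (intro continuous_intros) auto
  qed (simp_all add: H_def[abs_def] h'_def[abs_def])
  finally show ?thesis
    unfolding H_def .
qed

section \<open>The variance-gamma law as a normal variance-mean mixture\<close>

text \<open>
  \<open>mixture_density r\<close> is the joint density of independent \<open>G\<close> (chi-squared, \<open>r\<close> degrees of
  freedom) and \<open>Z\<close> (standard normal); \<open>vg_joint_density r \<theta> \<sigma> x g\<close> is the joint density of
  \<open>(\<theta> G + \<sigma> sqrt G Z, G)\<close>.
\<close>

definition mixture_const :: "real \<Rightarrow> real" where
  "mixture_const r = 1 / (2 powr (r / 2) * Gamma (r / 2) * sqrt (2 * pi))"

definition mixture_density :: "real \<Rightarrow> real \<times> real \<Rightarrow> real" where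
  "mixture_density r \<omega> = mixture_const r * chisq_kernel r (fst \<omega>) * exp (- (snd \<omega>)\<^sup>2 / 2)"

definition mixture_noise :: "real \<times> real \<Rightarrow> real" where
  "mixture_noise \<omega> = sqrt (fst \<omega>) * snd \<omega>"

definition mixture_map :: "real \<Rightarrow> real \<Rightarrow> real \<times> real \<Rightarrow> real" where
  "mixture_map \<theta> \<sigma> \<omega> = \<theta> * fst \<omega> + \<sigma> * sqrt (fst \<omega>) * snd \<omega>"

definition vg_joint_density :: "real \<Rightarrow> real \<Rightarrow> real \<Rightarrow> real \<Rightarrow> real \<Rightarrow> real" where
  "vg_joint_density r \<theta> \<sigma> x g =
     mixture_const r * chisq_kernel r g * exp (- ((x - \<theta> * g) / (\<sigma> * sqrt g))\<^sup>2 / 2) / (\<sigma> * sqrt g)"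

lemma mixture_map_eq: "mixture_map \<theta> \<sigma> \<omega> = \<theta> * fst \<omega> + \<sigma> * mixture_noise \<omega>"
  by (simp add: mixture_map_def mixture_noise_def)

lemma mixture_const_pos: "0 < r \<Longrightarrow> 0 < mixture_const r"
  by (simp add: mixture_const_def Gamma_real_pos)

lemma mixture_density_nonneg: "0 < r \<Longrightarrow> 0 \<le> mixture_density r \<omega>"
  unfolding mixture_density_def
  using mixture_const_pos[of r] chisq_kernel_nonneg[of r] by (simp add: less_imp_le)

lemma borel_measurable_mixture_density [measurable]:
  "mixture_density r \<in> borel_measurable (lborel \<Otimes>\<^sub>M lborel)"
  unfolding mixture_density_def[abs_def] by measurable

lemma borel_measurable_mixture_noise [measurable]: "mixture_noise \<in> borel_measurable (lborel \<Otimes>\<^sub>M lborel)"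
  unfolding mixture_noise_def[abs_def] by measurable

lemma borel_measurable_mixture_map [measurable]:
  "mixture_map \<theta> \<sigma> \<in> borel_measurable (lborel \<Otimes>\<^sub>M lborel)"
  unfolding mixture_map_def[abs_def] by measurable

lemma borel_measurable_vg_joint_density [measurable]:
  "(\<lambda>(x, g). vg_joint_density r \<theta> \<sigma> x g) \<in> borel_measurable (lborel \<Otimes>\<^sub>M lborel)"
  unfolding vg_joint_density_def[abs_def] by measurable

lemma vg_joint_density_eq:
  fixes r \<theta> \<sigma> x g :: real
  assumes "0 < \<sigma>"
  defines "A \<equiv> (\<sigma>\<^sup>2 + \<theta>\<^sup>2) / (2 * \<sigma>\<^sup>2)" and "B \<equiv> x\<^sup>2 / (2 * \<sigma>\<^sup>2)"
  shows "vg_joint_density r \<theta> \<sigma> x g = (mixture_const r / \<sigma> * exp (\<theta> * x / \<sigma>\<^sup>2))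
      * (g powr ((r - 1) / 2 - 1) * exp (- A * g - B / g) * indicator {0<..} g)"
proof (cases "0 < g")
  case True
  have "g powr (r / 2 - 1) / sqrt g = g powr (r / 2 - 1) / g powr (1 / 2)"
    using True by (simp add: powr_half_sqrt)
  also have "\<dots> = g powr ((r - 1) / 2 - 1)"
    by (simp add: powr_diff[symmetric] diff_divide_distrib)
  finally have powr_eq: "g powr (r / 2 - 1) / sqrt g = g powr ((r - 1) / 2 - 1)" .
  define q where "q = ((x - \<theta> * g) / (\<sigma> * sqrt g))\<^sup>2"
  have q_eq: "q = (x - \<theta> * g)\<^sup>2 / (\<sigma>\<^sup>2 * g)"
    using True by (simp add: q_def power_divide power_mult_distrib)
  have "- g / 2 + - q / 2 = \<theta> * x / \<sigma>\<^sup>2 + (- A * g - B / g)"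
    using True assms(1) unfolding A_def B_def by (simp add: q_eq field_simps power2_eq_square)
  then have exp_eq: "exp (- g / 2) * exp (- q / 2) = exp (\<theta> * x / \<sigma>\<^sup>2) * exp (- A * g - B / g)"
    by (simp only: exp_add[symmetric])
  have rearrange: "\<And>c p e e' s t :: real. c * (p * e) * e' / (s * t) = c / s * (p / t) * (e * e')"
    by (simp add: divide_inverse mult_ac)
  have "vg_joint_density r \<theta> \<sigma> x g
      = mixture_const r * (g powr (r / 2 - 1) * exp (- g / 2)) * exp (- q / 2) / (\<sigma> * sqrt g)"
    using True unfolding vg_joint_density_def chisq_kernel_def q_def by simp
  then show ?thesis
    using True unfolding rearrange powr_eq exp_eq by (simp add: mult_ac)
next
  case False
  then show ?thesis
    by (simp add: vg_joint_density_def chisq_kernel_def)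
qed

lemma mixture_const_eq:
  assumes "0 < r"
  shows "mixture_const r / \<sigma> * 2 * 2 powr ((r - 1) / 2) = 1 / (\<sigma> * sqrt pi * Gamma (r / 2))"
proof -
  have "2 * 2 powr ((r - 1) / 2) = 2 powr ((r - 1) / 2 + 1)"
    by (simp add: powr_add)
  also have "\<dots> = 2 powr (r / 2 + 1 / 2)"
    by (intro arg_cong[where f = "\<lambda>a. (2::real) powr a"]) (simp add: field_simps)
  also have "\<dots> = 2 powr (r / 2) * (2::real) powr (1 / 2)"
    by (rule powr_add)
  finally have "2 * 2 powr ((r - 1) / 2) = 2 powr (r / 2) * sqrt 2"
    by (simp add: powr_half_sqrt)
  then have "mixture_const r / \<sigma> * 2 * 2 powr ((r - 1) / 2) = mixture_const r / \<sigma> * (2 powr (r / 2) * sqrt 2)"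
    by (simp add: mult.assoc)
  also have "\<dots> = 1 / (\<sigma> * sqrt pi * Gamma (r / 2))"
    unfolding mixture_const_def using Gamma_real_pos[of "r / 2"] assms
    by (simp add: real_sqrt_mult field_simps)
  finally show ?thesis .
qed

lemma nn_integral_vg_joint_density:
  fixes r \<theta> \<sigma> x :: real
  assumes r: "0 < r" and s: "0 < \<sigma>" and x: "x \<noteq> 0"
  shows "(\<integral>\<^sup>+g. ennreal (vg_joint_density r \<theta> \<sigma> x g) \<partial>lborel) = ennreal (vg_density r \<theta> \<sigma> 0 x)"
proof -
  define A where "A = (\<sigma>\<^sup>2 + \<theta>\<^sup>2) / (2 * \<sigma>\<^sup>2)"
  define B where "B = x\<^sup>2 / (2 * \<sigma>\<^sup>2)"
  define \<nu> where "\<nu> = (r - 1) / 2"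
  define C where "C = mixture_const r / \<sigma> * exp (\<theta> * x / \<sigma>\<^sup>2)"
  define S where "S = sqrt (\<theta>\<^sup>2 + \<sigma>\<^sup>2)"
  have A: "0 < A" and B: "0 < B" and C: "0 \<le> C" and S: "0 < S"
    using s x mixture_const_pos[OF r]
    by (simp_all add: A_def B_def C_def S_def add_pos_nonneg add_nonneg_pos)
  have "(\<integral>\<^sup>+g. ennreal (vg_joint_density r \<theta> \<sigma> x g) \<partial>lborel)
      = (\<integral>\<^sup>+g. ennreal C * ennreal (g powr (\<nu> - 1) * exp (- A * g - B / g) * indicator {0<..} g) \<partial>lborel)"
  proof (intro nn_integral_cong)
    fix g
    have "vg_joint_density r \<theta> \<sigma> x g = C * (g powr (\<nu> - 1) * exp (- A * g - B / g) * indicator {0<..} g)"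
      using vg_joint_density_eq[OF s, of r \<theta> x g] unfolding A_def B_def \<nu>_def C_def by simp
    then show "ennreal (vg_joint_density r \<theta> \<sigma> x g)
        = ennreal C * ennreal (g powr (\<nu> - 1) * exp (- A * g - B / g) * indicator {0<..} g)"
      using C by (simp add: ennreal_mult)
  qed
  also have "\<dots> = ennreal C * ennreal (2 * (B / A) powr (\<nu> / 2) * besselK \<nu> (2 * sqrt (A * B)))"
    using nn_integral_powr_exp_inv_eq_besselK[OF A B, of \<nu>] by (simp add: nn_integral_cmult)
  also have "\<dots> = ennreal (C * (2 * (B / A) powr (\<nu> / 2) * besselK \<nu> (2 * sqrt (A * B))))"
    by (rule ennreal_mult'[symmetric, OF C])
  also have "C * (2 * (B / A) powr (\<nu> / 2) * besselK \<nu> (2 * sqrt (A * B))) = vg_density r \<theta> \<sigma> 0 x"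
  proof -
    have "A * B = (S / \<sigma>\<^sup>2 * \<bar>x\<bar> / 2)\<^sup>2"
      using s unfolding A_def B_def S_def
      by (simp add: power_mult_distrib power_divide field_simps add.commute)
    then have arg: "2 * sqrt (A * B) = S / \<sigma>\<^sup>2 * \<bar>x\<bar>"
      using S by simp
    have "B / A = (\<bar>x\<bar> / S) powr 2"
      using s S x unfolding A_def B_def S_def
      by (simp add: powr_numeral power_divide field_simps add.commute)
    then have "(B / A) powr (\<nu> / 2) = (\<bar>x\<bar> / S) powr \<nu>"
      by (simp add: powr_powr)
    also have "\<dots> = 2 powr \<nu> * (\<bar>x\<bar> / (2 * S)) powr \<nu>"
      using S by (simp add: powr_mult[symmetric])
    finally have "C * (2 * (B / A) powr (\<nu> / 2) * besselK \<nu> (2 * sqrt (A * B)))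
        = (mixture_const r / \<sigma> * 2 * 2 powr \<nu>) * exp (\<theta> * x / \<sigma>\<^sup>2) * (\<bar>x\<bar> / (2 * S)) powr \<nu>
          * besselK \<nu> (S / \<sigma>\<^sup>2 * \<bar>x\<bar>)"
      unfolding arg C_def by (simp add: mult_ac)
    then show ?thesis
      unfolding \<nu>_def mixture_const_eq[OF r] vg_density_def S_def by simp
  qed
  finally show ?thesis .
qed

lemma nn_integral_mixture_fibre:
  assumes r: "0 < r" and s: "0 < \<sigma>" and [measurable]: "X \<in> sets borel"
  shows "(\<integral>\<^sup>+z. ennreal (mixture_density r (g, z)) * indicator X (mixture_map \<theta> \<sigma> (g, z)) \<partial>lborel)
       = (\<integral>\<^sup>+x. ennreal (vg_joint_density r \<theta> \<sigma> x g) * indicator X x \<partial>lborel)"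
proof (cases "0 < g")
  case True
  define a where "a = \<sigma> * sqrt g"
  have a: "0 < a"
    using True s by (simp add: a_def)
  let ?F = "\<lambda>x. ennreal (vg_joint_density r \<theta> \<sigma> x g) * indicator X x"
  have "(\<integral>\<^sup>+x. ?F x \<partial>lborel) = ennreal a * (\<integral>\<^sup>+z. ?F (\<theta> * g + a * z) \<partial>lborel)"
    using a by (subst nn_integral_real_affine[where c = a and t = "\<theta> * g"]) auto
  also have "\<dots> = (\<integral>\<^sup>+z. ennreal a * ?F (\<theta> * g + a * z) \<partial>lborel)"
    by (rule nn_integral_cmult[symmetric]) measurable
  also have "\<dots> = (\<integral>\<^sup>+z. ennreal (mixture_density r (g, z)) * indicator X (mixture_map \<theta> \<sigma> (g, z)) \<partial>lborel)"
  proof (intro nn_integral_cong)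
    fix z :: real
    have "vg_joint_density r \<theta> \<sigma> (\<theta> * g + a * z) g = mixture_const r * chisq_kernel r g * exp (- z\<^sup>2 / 2) / a"
      using a unfolding vg_joint_density_def by (simp add: a_def)
    then have dens: "a * vg_joint_density r \<theta> \<sigma> (\<theta> * g + a * z) g = mixture_density r (g, z)"
      using a by (simp add: mixture_density_def)
    have map_eq: "mixture_map \<theta> \<sigma> (g, z) = \<theta> * g + a * z"
      by (simp add: mixture_map_def a_def)
    have nonneg: "0 \<le> vg_joint_density r \<theta> \<sigma> (\<theta> * g + a * z) g"
      unfolding vg_joint_density_def
      using mixture_const_pos[OF r] chisq_kernel_nonneg[of r g] a by (simp add: a_def)
    show "ennreal a * ?F (\<theta> * g + a * z)
        = ennreal (mixture_density r (g, z)) * indicator X (mixture_map \<theta> \<sigma> (g, z))"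
      by (simp only: mult.assoc[symmetric] ennreal_mult[symmetric, OF less_imp_le[OF a] nonneg] dens map_eq)
  qed
  finally show ?thesis ..
next
  case False
  then show ?thesis
    by (simp add: mixture_density_def vg_joint_density_def chisq_kernel_def)
qed

lemma distr_mixture_eq_vg:
  assumes r: "0 < r" and s: "0 < \<sigma>"
  shows "distr (density (lborel \<Otimes>\<^sub>M lborel) (\<lambda>\<omega>. ennreal (mixture_density r \<omega>))) lborel (mixture_map \<theta> \<sigma>)
       = density lborel (\<lambda>x. ennreal (vg_density r \<theta> \<sigma> 0 x))"
    (is "?mix = ?vg")
proof (rule measure_eqI)
  fix X assume "X \<in> sets ?mix"
  then have X [measurable]: "X \<in> sets borel"
    by simp
  have [measurable]: "(\<lambda>x. ennreal (vg_density r \<theta> \<sigma> 0 x)) \<in> borel_measurable borel"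
    unfolding vg_density_def besselK_def set_lebesgue_integral_def by measurable
  have "emeasure ?mix X
      = (\<integral>\<^sup>+\<omega>. ennreal (mixture_density r \<omega>) * indicator X (mixture_map \<theta> \<sigma> \<omega>) \<partial>(lborel \<Otimes>\<^sub>M lborel))"
  proof -
    have "mixture_map \<theta> \<sigma> -` X \<in> sets (lborel \<Otimes>\<^sub>M lborel)"
      using measurable_sets[OF borel_measurable_mixture_map X] by (simp add: space_pair_measure)
    then show ?thesis
      by (subst emeasure_distr, simp_all add: space_pair_measure emeasure_density indicator_vimage)
  qed
  also have "\<dots> = (\<integral>\<^sup>+g. \<integral>\<^sup>+z. ennreal (mixture_density r (g, z)) * indicator X (mixture_map \<theta> \<sigma> (g, z)) \<partial>lborel \<partial>lborel)"
    by (rule lborel.nn_integral_fst[symmetric]) measurable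
  also have "\<dots> = (\<integral>\<^sup>+g. \<integral>\<^sup>+x. ennreal (vg_joint_density r \<theta> \<sigma> x g) * indicator X x \<partial>lborel \<partial>lborel)"
    by (intro nn_integral_cong nn_integral_mixture_fibre[OF r s X])
  also have "\<dots> = (\<integral>\<^sup>+x. \<integral>\<^sup>+g. ennreal (vg_joint_density r \<theta> \<sigma> x g) * indicator X x \<partial>lborel \<partial>lborel)"
    using lborel_pair.Fubini[of "\<lambda>(x, g). ennreal (vg_joint_density r \<theta> \<sigma> x g) * indicator X x"] by simp
  also have "\<dots> = (\<integral>\<^sup>+x. (\<integral>\<^sup>+g. ennreal (vg_joint_density r \<theta> \<sigma> x g) \<partial>lborel) * indicator X x \<partial>lborel)"
    by (intro nn_integral_cong nn_integral_multc) measurable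
  also have "\<dots> = (\<integral>\<^sup>+x. ennreal (vg_density r \<theta> \<sigma> 0 x) * indicator X x \<partial>lborel)"
    by (intro nn_integral_cong_AE, use AE_lborel_singleton[of 0] in eventually_elim)
       (simp add: nn_integral_vg_joint_density[OF r s])
  also have "\<dots> = emeasure ?vg X"
    by (subst emeasure_density) auto
  finally show "emeasure ?mix X = emeasure ?vg X" .
qed simp

lemma integral_vg_eq_mixture:
  assumes r: "0 < r" and s: "0 < \<sigma>"
    and Y: "distributed M lborel Y (\<lambda>x. ennreal (vg_density r \<theta> \<sigma> 0 x))"
    and [measurable]: "f \<in> borel_measurable borel"
  shows "(\<integral>\<omega>. f (Y \<omega>) \<partial>M) = (\<integral>\<omega>. mixture_density r \<omega> * f (mixture_map \<theta> \<sigma> \<omega>) \<partial>(lborel \<Otimes>\<^sub>M lborel))"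
proof -
  have Y_measurable: "Y \<in> measurable M lborel"
    and distr_Y: "distr M lborel Y = density lborel (\<lambda>x. ennreal (vg_density r \<theta> \<sigma> 0 x))"
    using Y by (simp_all add: distributed_def)
  have "(\<integral>\<omega>. f (Y \<omega>) \<partial>M) = (\<integral>x. f x \<partial>distr M lborel Y)"
    by (rule integral_distr[symmetric, OF Y_measurable]) simp
  also have "\<dots> = (\<integral>x. f x \<partial>distr (density (lborel \<Otimes>\<^sub>M lborel) (\<lambda>\<omega>. ennreal (mixture_density r \<omega>)))
      lborel (mixture_map \<theta> \<sigma>))"
    unfolding distr_Y distr_mixture_eq_vg[OF r s] ..
  also have "\<dots> = (\<integral>\<omega>. f (mixture_map \<theta> \<sigma> \<omega>)
      \<partial>density (lborel \<Otimes>\<^sub>M lborel) (\<lambda>\<omega>. ennreal (mixture_density r \<omega>)))"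
    by (rule integral_distr) simp_all
  also have "\<dots> = (\<integral>\<omega>. mixture_density r \<omega> * f (mixture_map \<theta> \<sigma> \<omega>) \<partial>(lborel \<Otimes>\<^sub>M lborel))"
    by (subst integral_density) (auto simp: mixture_density_nonneg[OF r])
  finally show ?thesis .
qed

section \<open>Moments\<close>

definition mixture_moment :: "real \<Rightarrow> real \<Rightarrow> real \<Rightarrow> (real \<times> real \<Rightarrow> real) \<Rightarrow> real \<Rightarrow> nat \<Rightarrow> real" where
  "mixture_moment r \<theta> \<sigma> P c j =
     (\<integral>\<omega>. mixture_density r \<omega> * (P \<omega> * (mixture_map \<theta> \<sigma> \<omega> - c) ^ j) \<partial>(lborel \<Otimes>\<^sub>M lborel))"

lemma integrable_mixture_density_bounded:
  assumes r: "0 < r" and [measurable]: "f \<in> borel_measurable (lborel \<Otimes>\<^sub>M lborel)"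
    and bound: "\<And>g z. 0 < g \<Longrightarrow> \<bar>f (g, z)\<bar> \<le> K * ((1 + g) ^ m * (1 + \<bar>z\<bar>) ^ m)"
  shows "integrable (lborel \<Otimes>\<^sub>M lborel) (\<lambda>\<omega>. mixture_density r \<omega> * f \<omega>)"
proof (rule Bochner_Integration.integrable_bound)
  let ?W = "\<lambda>\<omega>. (mixture_const r * (chisq_kernel r (fst \<omega>) * (1 + fst \<omega>) ^ m))
      * (exp (- (snd \<omega>)\<^sup>2 / 2) * (1 + \<bar>snd \<omega>\<bar>) ^ m)"
  have "integrable (lborel \<Otimes>\<^sub>M lborel) ?W"
    using r by (intro lborel_pair.integrable_product integrable_mult_right
        integrable_chisq_kernel_power integrable_gauss_power)
  then show "integrable (lborel \<Otimes>\<^sub>M lborel) (\<lambda>\<omega>. \<bar>K\<bar> * ?W \<omega>)"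
    by (rule integrable_mult_right)
  have "norm (mixture_density r (g, z) * f (g, z)) \<le> norm (\<bar>K\<bar> * ?W (g, z))" for g z
  proof (cases "0 < g")
    case True
    have "\<bar>mixture_density r (g, z) * f (g, z)\<bar> = mixture_density r (g, z) * \<bar>f (g, z)\<bar>"
      using mixture_density_nonneg[OF r] by (simp add: abs_mult)
    also have "\<dots> \<le> mixture_density r (g, z) * (\<bar>K\<bar> * ((1 + g) ^ m * (1 + \<bar>z\<bar>) ^ m))"
    proof (intro mult_left_mono mixture_density_nonneg[OF r])
      show "\<bar>f (g, z)\<bar> \<le> \<bar>K\<bar> * ((1 + g) ^ m * (1 + \<bar>z\<bar>) ^ m)"
        using bound[OF True] by (rule order_trans) (rule mult_right_mono[OF abs_ge_self], insert True, simp)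
    qed
    also have "\<dots> = norm (\<bar>K\<bar> * ?W (g, z))"
      using True mixture_const_pos[OF r] chisq_kernel_nonneg[of r g]
      by (simp add: mixture_density_def abs_mult mult_ac)
    finally show ?thesis
      by simp
  qed (simp add: mixture_density_def chisq_kernel_def)
  then show "AE \<omega> in lborel \<Otimes>\<^sub>M lborel. norm (mixture_density r \<omega> * f \<omega>) \<le> norm (\<bar>K\<bar> * ?W \<omega>)"
    by (intro AE_I2) (auto simp: split_paired_all)
qed measurable

lemma integrable_mixture_moment:
  assumes r: "0 < r" and P: "P \<in> {\<lambda>_. 1, fst, mixture_noise}"
  shows "integrable (lborel \<Otimes>\<^sub>M lborel) (\<lambda>\<omega>. mixture_density r \<omega> * (P \<omega> * (mixture_map \<theta> \<sigma> \<omega> - c) ^ j))"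
proof (rule integrable_mixture_density_bounded[OF r, where K = "(1 + \<bar>\<theta>\<bar> + \<bar>\<sigma>\<bar> + \<bar>c\<bar>) ^ j" and m = "j + 1"])
  show "(\<lambda>\<omega>. P \<omega> * (mixture_map \<theta> \<sigma> \<omega> - c) ^ j) \<in> borel_measurable (lborel \<Otimes>\<^sub>M lborel)"
    using P by auto
  fix g z :: real
  assume g: "0 < g"
  define N where "N = (1 + g) * (1 + \<bar>z\<bar>)"
  have "sqrt g * \<bar>z\<bar> \<le> N"
    unfolding N_def using g sqrt_le_one_plus[of g] by (intro mult_mono) auto
  moreover have "1 \<le> N" "g \<le> N"
    using g mult_nonneg_nonneg[of g "\<bar>z\<bar>"] unfolding N_def by (auto simp: algebra_simps)
  ultimately have N: "1 \<le> N" "g \<le> N" "sqrt g * \<bar>z\<bar> \<le> N"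
    by auto
  have "\<bar>P (g, z)\<bar> \<le> N"
    using P N g by (auto simp: mixture_noise_def abs_mult)
  moreover have "\<bar>mixture_map \<theta> \<sigma> (g, z) - c\<bar> \<le> (1 + \<bar>\<theta>\<bar> + \<bar>\<sigma>\<bar> + \<bar>c\<bar>) * N"
  proof -
    have "\<bar>mixture_map \<theta> \<sigma> (g, z) - c\<bar> \<le> \<bar>\<theta>\<bar> * g + \<bar>\<sigma>\<bar> * (sqrt g * \<bar>z\<bar>) + \<bar>c\<bar> * 1"
      using g by (simp add: mixture_map_def abs_mult
          abs_triangle_ineq4[THEN order_trans] abs_triangle_ineq[THEN order_trans])
    also have "\<dots> \<le> \<bar>\<theta>\<bar> * N + \<bar>\<sigma>\<bar> * N + \<bar>c\<bar> * N"
      using N by (intro add_mono mult_left_mono) auto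
    also have "\<dots> \<le> (1 + \<bar>\<theta>\<bar> + \<bar>\<sigma>\<bar> + \<bar>c\<bar>) * N"
      using N by (simp add: algebra_simps)
    finally show ?thesis .
  qed
  ultimately have "\<bar>P (g, z) * (mixture_map \<theta> \<sigma> (g, z) - c) ^ j\<bar> \<le> N * ((1 + \<bar>\<theta>\<bar> + \<bar>\<sigma>\<bar> + \<bar>c\<bar>) * N) ^ j"
    unfolding abs_mult power_abs by (intro mult_mono power_mono) auto
  then show "\<bar>P (g, z) * (mixture_map \<theta> \<sigma> (g, z) - c) ^ j\<bar>
      \<le> (1 + \<bar>\<theta>\<bar> + \<bar>\<sigma>\<bar> + \<bar>c\<bar>) ^ j * ((1 + g) ^ (j + 1) * (1 + \<bar>z\<bar>) ^ (j + 1))"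
    by (simp add: N_def power_mult_distrib mult_ac)
qed

lemma mixture_moment_Suc:
  assumes "0 < r"
  shows "mixture_moment r \<theta> \<sigma> (\<lambda>_. 1) c (Suc j)
    = \<theta> * mixture_moment r \<theta> \<sigma> fst c j + \<sigma> * mixture_moment r \<theta> \<sigma> mixture_noise c j
      - c * mixture_moment r \<theta> \<sigma> (\<lambda>_. 1) c j"
proof -
  have "mixture_density r \<omega> * (1 * (mixture_map \<theta> \<sigma> \<omega> - c) ^ Suc j)
      = \<theta> * (mixture_density r \<omega> * (fst \<omega> * (mixture_map \<theta> \<sigma> \<omega> - c) ^ j))
        + \<sigma> * (mixture_density r \<omega> * (mixture_noise \<omega> * (mixture_map \<theta> \<sigma> \<omega> - c) ^ j))
        - c * (mixture_density r \<omega> * (1 * (mixture_map \<theta> \<sigma> \<omega> - c) ^ j))" for \<omega>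
    by (simp add: mixture_map_eq algebra_simps)
  moreover have "has_bochner_integral (lborel \<Otimes>\<^sub>M lborel)
      (\<lambda>\<omega>. \<theta> * (mixture_density r \<omega> * (fst \<omega> * (mixture_map \<theta> \<sigma> \<omega> - c) ^ j))
        + \<sigma> * (mixture_density r \<omega> * (mixture_noise \<omega> * (mixture_map \<theta> \<sigma> \<omega> - c) ^ j))
        - c * (mixture_density r \<omega> * (1 * (mixture_map \<theta> \<sigma> \<omega> - c) ^ j)))
      (\<theta> * mixture_moment r \<theta> \<sigma> fst c j + \<sigma> * mixture_moment r \<theta> \<sigma> mixture_noise c j
        - c * mixture_moment r \<theta> \<sigma> (\<lambda>_. 1) c j)"
    unfolding mixture_moment_def using assms
    by (intro has_bochner_integral_diff has_bochner_integral_add has_bochner_integral_mult_right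
        has_bochner_integral_integrable integrable_mixture_moment) auto
  ultimately show ?thesis
    unfolding mixture_moment_def[of r \<theta> \<sigma> "\<lambda>_. 1" c "Suc j"]
    by (simp add: has_bochner_integral_integral_eq)
qed

lemma mixture_noise_moment_eq:
  assumes r: "0 < r"
  shows "mixture_moment r \<theta> \<sigma> mixture_noise c j = \<sigma> * real j * mixture_moment r \<theta> \<sigma> fst c (j - 1)"
proof -
  define Q where "Q \<omega> = mixture_density r \<omega> * (mixture_noise \<omega> * (mixture_map \<theta> \<sigma> \<omega> - c) ^ j)
      - \<sigma> * real j * (mixture_density r \<omega> * (fst \<omega> * (mixture_map \<theta> \<sigma> \<omega> - c) ^ (j - 1)))" for \<omega>
  have Q: "has_bochner_integral (lborel \<Otimes>\<^sub>M lborel) Q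
      (mixture_moment r \<theta> \<sigma> mixture_noise c j - \<sigma> * real j * mixture_moment r \<theta> \<sigma> fst c (j - 1))"
    unfolding Q_def mixture_moment_def using r
    by (intro has_bochner_integral_diff has_bochner_integral_mult_right
        has_bochner_integral_integrable integrable_mixture_moment) auto
  have "(\<integral>z. Q (g, z) \<partial>lborel) = 0" for g
  proof (cases "0 < g")
    case True
    define \<alpha> where "\<alpha> = \<theta> * g - c"
    define \<gamma> where "\<gamma> = \<sigma> * sqrt g"
    have "Q (g, z) = (mixture_const r * chisq_kernel r g * sqrt g)
        * (exp (- z\<^sup>2 / 2) * (z * (\<alpha> + \<gamma> * z) ^ j - real j * (\<alpha> + \<gamma> * z) ^ (j - 1) * \<gamma>))" for z
    proof -
      have "mixture_map \<theta> \<sigma> (g, z) - c = \<alpha> + \<gamma> * z" and "\<gamma> * sqrt g = \<sigma> * g"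
        using True by (simp_all add: mixture_map_def \<alpha>_def \<gamma>_def algebra_simps)
      then show ?thesis
        unfolding Q_def by (simp add: mixture_density_def mixture_noise_def algebra_simps)
    qed
    then show ?thesis
      using gauss_stein_linear_power[of \<alpha> \<gamma> j] by simp
  qed (simp add: Q_def mixture_density_def chisq_kernel_def)
  then have "integral\<^sup>L (lborel \<Otimes>\<^sub>M lborel) Q = 0"
    using lborel_pair.integral_fst'[OF integrable.intros[OF Q]] by simp
  then show ?thesis
    using has_bochner_integral_integral_eq[OF Q] by simp
qed

lemma mixture_scale_moment_eq:
  assumes r: "0 < r"
  shows "mixture_moment r \<theta> \<sigma> fst c j = r * mixture_moment r \<theta> \<sigma> (\<lambda>_. 1) c j
    + 2 * \<theta> * real j * mixture_moment r \<theta> \<sigma> fst c (j - 1)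
    + \<sigma> * real j * mixture_moment r \<theta> \<sigma> mixture_noise c (j - 1)"
proof -
  define Q where "Q \<omega> = mixture_density r \<omega> * (fst \<omega> * (mixture_map \<theta> \<sigma> \<omega> - c) ^ j)
      - r * (mixture_density r \<omega> * (1 * (mixture_map \<theta> \<sigma> \<omega> - c) ^ j))
      - 2 * \<theta> * real j * (mixture_density r \<omega> * (fst \<omega> * (mixture_map \<theta> \<sigma> \<omega> - c) ^ (j - 1)))
      - \<sigma> * real j * (mixture_density r \<omega> * (mixture_noise \<omega> * (mixture_map \<theta> \<sigma> \<omega> - c) ^ (j - 1)))" for \<omega>
  have Q: "has_bochner_integral (lborel \<Otimes>\<^sub>M lborel) Q
      (mixture_moment r \<theta> \<sigma> fst c j - r * mixture_moment r \<theta> \<sigma> (\<lambda>_. 1) c j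
       - 2 * \<theta> * real j * mixture_moment r \<theta> \<sigma> fst c (j - 1)
       - \<sigma> * real j * mixture_moment r \<theta> \<sigma> mixture_noise c (j - 1))"
    unfolding Q_def mixture_moment_def using r
    by (intro has_bochner_integral_diff has_bochner_integral_mult_right
        has_bochner_integral_integrable integrable_mixture_moment) auto
  have "(\<integral>g. Q (g, z) \<partial>lborel) = 0" for z
  proof -
    have "Q (g, z) = (mixture_const r * exp (- z\<^sup>2 / 2)) * (chisq_kernel r g
        * ((g - r) * (\<theta> * g + \<sigma> * sqrt g * z - c) ^ j
           - real j * (\<theta> * g + \<sigma> * sqrt g * z - c) ^ (j - 1) * (2 * \<theta> * g + \<sigma> * sqrt g * z)))" for g
      unfolding Q_def by (simp add: mixture_density_def mixture_map_def mixture_noise_def algebra_simps)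
    then show ?thesis
      using chisq_stein_mixture_power[OF r, of \<theta> \<sigma> z c j] by simp
  qed
  then have "integral\<^sup>L (lborel \<Otimes>\<^sub>M lborel) Q = 0"
    using lborel_pair.integral_snd[of "\<lambda>g z. Q (g, z)"] integrable.intros[OF Q] by simp
  then show ?thesis
    using has_bochner_integral_integral_eq[OF Q] by simp
qed

text \<open>The truncated subtractions \<open>j - 1\<close>, \<open>k - 1\<close>, \<open>k - 2\<close> are harmless: whenever they
  truncate, the term carries a vanishing factor \<open>real j\<close> or \<open>real k\<close>.\<close>

lemma moment_recurrence_from_identities:
  fixes A B S :: "nat \<Rightarrow> real"
  assumes A_Suc: "\<And>j. A (Suc j) = \<theta> * B j + \<sigma> * S j - c * A j"
    and S_eq: "\<And>j. S j = \<sigma> * real j * B (j - 1)"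
    and B_eq: "\<And>j. B j = r * A j + 2 * \<theta> * real j * B (j - 1) + \<sigma> * real j * S (j - 1)"
  shows "A (Suc k) = (2 * real k * \<theta> + r * \<theta> - c) * A k
    + real k * (\<sigma>\<^sup>2 * (r + real k - 1) + 2 * \<theta> * c) * A (k - 1)
    + real k * (real k - 1) * \<sigma>\<^sup>2 * c * A (k - 2)"
proof -
  have S0: "S 0 = 0"
    using S_eq[of 0] by simp
  have B0: "B 0 = r * A 0"
    using B_eq[of 0] S0 by simp
  consider "k = 0" | "k = Suc 0" | m where "k = Suc (Suc m)"
    by (metis not0_implies_Suc)
  then show ?thesis
  proof cases
    case 1
    then show ?thesis
      using A_Suc[of 0] S0 B0 by (simp add: algebra_simps)
  next
    case 2
    then show ?thesis
      by (simp only: A_Suc[of "Suc 0"] A_Suc[of 0] S_eq[of "Suc 0"] B_eq[of "Suc 0"] S0 B0 diff_Suc_1)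
         (simp add: algebra_simps power2_eq_square)
  next
    case 3
    then show ?thesis
      by (simp only: A_Suc[of "Suc (Suc m)"] A_Suc[of "Suc m"] A_Suc[of m]
          S_eq[of "Suc (Suc m)"] S_eq[of "Suc m"] S_eq[of m]
          B_eq[of "Suc (Suc m)"] B_eq[of "Suc m"] diff_Suc_1)
         (simp add: algebra_simps power2_eq_square)
  qed
qed

lemma vg_moment_recurrence:
  assumes r: "0 < r" and s: "0 < \<sigma>"
    and Y: "distributed M lborel Y (\<lambda>x. ennreal (vg_density r \<theta> \<sigma> 0 x))"
  shows "(\<integral>\<omega>. (Y \<omega> - c) ^ Suc k \<partial>M) = (2 * real k * \<theta> + r * \<theta> - c) * (\<integral>\<omega>. (Y \<omega> - c) ^ k \<partial>M)
    + real k * (\<sigma>\<^sup>2 * (r + real k - 1) + 2 * \<theta> * c) * (\<integral>\<omega>. (Y \<omega> - c) ^ (k - 1) \<partial>M)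
    + real k * (real k - 1) * \<sigma>\<^sup>2 * c * (\<integral>\<omega>. (Y \<omega> - c) ^ (k - 2) \<partial>M)"
proof -
  have moments: "(\<integral>\<omega>. (Y \<omega> - c) ^ j \<partial>M) = mixture_moment r \<theta> \<sigma> (\<lambda>_. 1) c j" for j
    unfolding mixture_moment_def using integral_vg_eq_mixture[OF r s Y, of "\<lambda>x. (x - c) ^ j"] by simp
  show ?thesis
    unfolding moments
    by (rule moment_recurrence_from_identities[OF mixture_moment_Suc[OF r]
          mixture_noise_moment_eq[OF r] mixture_scale_moment_eq[OF r]])
qed

theorem mainTheorem2:
  fixes M :: "'a measure" and Y :: "'a \<Rightarrow> real"
    and r \<theta> \<sigma> :: real
  assumes "r > 0" and "\<sigma> > 0"
    and "prob_space M"
    and "distributed M lborel Y (\<lambda>x. ennreal (vg_density r \<theta> \<sigma> 0 x))"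
  shows "(\<forall>k::nat. k \<ge> 1 \<longrightarrow>
            (LINT \<omega>|M. Y \<omega> ^ (k + 1))
              = \<theta> * (2 * real k + r) * (LINT \<omega>|M. Y \<omega> ^ k)
                + \<sigma>\<^sup>2 * real k * (r + real k - 1) * (LINT \<omega>|M. Y \<omega> ^ (k - 1)))
       \<and> (\<forall>k::nat. k \<ge> 2 \<longrightarrow>
            (LINT \<omega>|M. (Y \<omega> - (LINT \<omega>'|M. Y \<omega>')) ^ (k + 1))
              = 2 * real k * \<theta> * (LINT \<omega>|M. (Y \<omega> - (LINT \<omega>'|M. Y \<omega>')) ^ k)
                + real k * (\<sigma>\<^sup>2 * (r + real k - 1) + 2 * \<theta>\<^sup>2 * r)
                    * (LINT \<omega>|M. (Y \<omega> - (LINT \<omega>'|M. Y \<omega>')) ^ (k - 1))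
                + real k * (real k - 1) * r * \<theta> * \<sigma>\<^sup>2
                    * (LINT \<omega>|M. (Y \<omega> - (LINT \<omega>'|M. Y \<omega>')) ^ (k - 2)))"
proof -
  interpret prob_space M
    by fact
  note recurrence = vg_moment_recurrence[OF assms(1,2,4)]
  have mean: "(\<integral>\<omega>. Y \<omega> \<partial>M) = r * \<theta>"
    using recurrence[of 0 0] by (simp add: prob_space)
  show ?thesis
  proof (intro conjI allI impI)
    fix k :: nat
    show "(LINT \<omega>|M. Y \<omega> ^ (k + 1))
        = \<theta> * (2 * real k + r) * (LINT \<omega>|M. Y \<omega> ^ k)
          + \<sigma>\<^sup>2 * real k * (r + real k - 1) * (LINT \<omega>|M. Y \<omega> ^ (k - 1))"
      using recurrence[of 0 k] by (simp add: algebra_simps)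
    show "(LINT \<omega>|M. (Y \<omega> - (LINT \<omega>'|M. Y \<omega>')) ^ (k + 1))
        = 2 * real k * \<theta> * (LINT \<omega>|M. (Y \<omega> - (LINT \<omega>'|M. Y \<omega>')) ^ k)
          + real k * (\<sigma>\<^sup>2 * (r + real k - 1) + 2 * \<theta>\<^sup>2 * r)
              * (LINT \<omega>|M. (Y \<omega> - (LINT \<omega>'|M. Y \<omega>')) ^ (k - 1))
          + real k * (real k - 1) * r * \<theta> * \<sigma>\<^sup>2
              * (LINT \<omega>|M. (Y \<omega> - (LINT \<omega>'|M. Y \<omega>')) ^ (k - 2))"
      using recurrence[of "\<integral>\<omega>. Y \<omega> \<partial>M" k] unfolding mean by (simp add: algebra_simps power2_eq_square)
  qed
qed

end
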